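(* Let $\{\mathcal G,(\Gamma_0,\Gamma_1),(\widetilde\Gamma_0,\widetilde\Gamma_1)\}$ be a triple for the adjoint pair $\{S,\widetilde S\}$ satisfying (G) and (M). Then: (i) if $\operatorname{ran}\Gamma_0$ is dense in $\mathcal G$ and $\operatorname{ran}\widetilde\Gamma_0=\mathcal G$, then $\operatorname{ran}(\Gamma_0,\Gamma_1)^\top$ is dense in $\mathcal G\times\mathcal G$; (ii) if $\operatorname{ran}\widetilde\Gamma_0$ is dense in $\mathcal G$ and $\operatorname{ran}\Gamma_0=\mathcal G$, then $\operatorname{ran}(\widetilde\Gamma_0,\widetilde\Gamma_1)^\top$ is dense in $\mathcal G\times\mathcal G$. In particular, if $\operatorname{ran}\Gamma_0=\operatorname{ran}\widetilde\Gamma_0=\mathcal G$, then condition (DD) holds and the triple is a quasi boundary triple for $\{S,\widetilde S\}$.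
   Context: Let $\mathfrak H$ be a separable Hilbert space. An adjoint pair $\{S,\widetilde S\}$ consists of densely defined closed operators $S,\widetilde S$ in $\mathfrak H$ with $(Sf,g)=(f,\widetilde Sg)$ for all $f\in\operatorname{dom}S$, $g\in\operatorname{dom}\widetilde S$. Fix operators $T\subset S^*$ and $\widetilde T\subset\widetilde S^*$ which are cores, i.e. $\overline T=S^*$ and $\overline{\widetilde T}=\widetilde S^*$ (equivalently $T^*=S$, $\widetilde T^*=\widetilde S$). A triple $\{\mathcal G,(\Gamma_0,\Gamma_1),(\widetilde\Gamma_0,\widetilde\Gamma_1)\}$ for $\{S,\widetilde S\}$ consists of a Hilbert space $\mathcal G$ and linear maps $\Gamma_0,\Gamma_1:\operatorname{dom}T\to\mathcal G$, $\widetilde\Gamma_0,\widetilde\Gamma_1:\operatorname{dom}\widetilde T\to\mathcal G$. Put $A_0:=T\upharpoonright\ker\Gamma_0$ and $\widetilde A_0:=\widetilde T\upharpoonright\ker\widetilde\Gamma_0$. Conditions: (G) $(Tf,g)_{\mathfrak H}-(f,\widetilde Tg)_{\mathfrak H}=(\Gamma_1f,\widetilde\Gamma_0g)_{\mathcal G}-(\Gamma_0f,\widetilde\Gamma_1g)_{\mathcal G}$ for all $f\in\operatorname{dom}T$, $g\in\operatorname{dom}\widetilde T$; (D) $\operatorname{ran}\Gamma_0$ and $\operatorname{ran}\widetilde\Gamma_0$ are dense in $\mathcal G$; (DD) $\operatorname{ran}(\Gamma_0,\Gamma_1)^\top$ and $\operatorname{ran}(\widetilde\Gamma_0,\widetilde\Gamma_1)^\top$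 are dense in $\mathcal G\times\mathcal G$; (M) $A_0^*=\widetilde A_0$ and $\widetilde A_0^*=A_0$. A quasi boundary triple is a triple satisfying (G), (DD) and (M). *)

theory Defs
  imports "HOL-Analysis.Analysis"
begin

class scaleC = scaleR +
  fixes scaleC :: "complex \<Rightarrow> 'a \<Rightarrow> 'a" (infixr \<open>*\<^sub>C\<close> 75)
  assumes scaleR_scaleC: "scaleR r = scaleC (complex_of_real r)"

class complex_vector = scaleC + ab_group_add +
  assumes scaleC_add_right: "a *\<^sub>C (x + y) = a *\<^sub>C x + a *\<^sub>C y"
    and scaleC_add_left: "(a + b) *\<^sub>C x = a *\<^sub>C x + b *\<^sub>C x"
    and scaleC_scaleC: "a *\<^sub>C b *\<^sub>C x = (a * b) *\<^sub>C x"
    and scaleC_one: "1 *\<^sub>C x = x"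

class complex_inner = complex_vector + real_normed_vector +
  fixes cinner :: "'a \<Rightarrow> 'a \<Rightarrow> complex"
  assumes cinner_commute: "cinner x y = cnj (cinner y x)"
    and cinner_add_left: "cinner (x + y) z = cinner x z + cinner y z"
    and cinner_scaleC_left: "cinner (r *\<^sub>C x) y = r * cinner x y"
    and cinner_ge_zero: "Im (cinner x x) = 0 \<and> 0 \<le> Re (cinner x x)"
    and cinner_eq_zero_iff: "cinner x x = 0 \<longleftrightarrow> x = 0"
    and norm_eq_sqrt_cinner: "norm x = sqrt (Re (cinner x x))"

text \<open>A Hilbert space is a type of sort {complex_inner, complete_space}.\<close>

definition csubspace :: "'a::complex_vector set \<Rightarrow> bool" where
  "csubspace D \<longleftrightarrow> 0 \<in> D \<and> (\<forall>x\<in>D. \<forall>y\<in>D. x + y \<in> D) \<and> (\<forall>c. \<forall>x\<in>D. c *\<^sub>C x \<in> D)"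

definition clinear_on :: "'a::complex_vector set \<Rightarrow> ('a \<Rightarrow> 'b::complex_vector) \<Rightarrow> bool" where
  "clinear_on D A \<longleftrightarrow> (\<forall>x\<in>D. \<forall>y\<in>D. A (x + y) = A x + A y) \<and> (\<forall>c. \<forall>x\<in>D. A (c *\<^sub>C x) = c *\<^sub>C A x)"

text \<open>A linear operator in a space is a pair (domain, action) with linear domain and action.\<close>
definition lin_op :: "'a::complex_vector set \<Rightarrow> ('a \<Rightarrow> 'a) \<Rightarrow> bool" where
  "lin_op D A \<longleftrightarrow> csubspace D \<and> clinear_on D A"

definition graph :: "'a set \<Rightarrow> ('a \<Rightarrow> 'b) \<Rightarrow> ('a \<times> 'b) set" where
  "graph D A = {(f, A f) | f. f \<in> D}"

definition densely_defined :: "'a::topological_space set \<Rightarrow> bool" where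
  "densely_defined D \<longleftrightarrow> closure D = UNIV"

definition closed_op :: "'a::topological_space set \<Rightarrow> ('a \<Rightarrow> 'a) \<Rightarrow> bool" where
  "closed_op D A \<longleftrightarrow> closed (graph D A)"

definition adj :: "'a::complex_inner set \<Rightarrow> ('a \<Rightarrow> 'a) \<Rightarrow> ('a \<times> 'a) set" where
  "adj D A = {(g, h). \<forall>f\<in>D. cinner (A f) g = cinner f h}"

definition adjoint_pair :: "'a::complex_inner set \<Rightarrow> ('a \<Rightarrow> 'a) \<Rightarrow> 'a set \<Rightarrow> ('a \<Rightarrow> 'a) \<Rightarrow> bool" where
  "adjoint_pair DS S DSt St \<longleftrightarrow>
     lin_op DS S \<and> densely_defined DS \<and> closed_op DS S \<and>
     lin_op DSt St \<and> densely_defined DSt \<and> closed_op DSt St \<and>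
     (\<forall>f\<in>DS. \<forall>g\<in>DSt. cinner (S f) g = cinner f (St g))"

definition core_of_adjoint :: "'a::complex_inner set \<Rightarrow> ('a \<Rightarrow> 'a) \<Rightarrow> 'a set \<Rightarrow> ('a \<Rightarrow> 'a) \<Rightarrow> bool" where
  "core_of_adjoint DT T DS S \<longleftrightarrow>
     lin_op DT T \<and> graph DT T \<subseteq> adj DS S \<and> closure (graph DT T) = adj DS S"

definition triple :: "'a::{complex_inner,complete_space} set \<Rightarrow> ('a \<Rightarrow> 'a) \<Rightarrow> 'a set \<Rightarrow> ('a \<Rightarrow> 'a) \<Rightarrow>
    'a set \<Rightarrow> ('a \<Rightarrow> 'a) \<Rightarrow> 'a set \<Rightarrow> ('a \<Rightarrow> 'a) \<Rightarrow>
    ('a \<Rightarrow> 'g::{complex_inner,complete_space}) \<Rightarrow> ('a \<Rightarrow> 'g) \<Rightarrow> ('a \<Rightarrow> 'g) \<Rightarrow> ('a \<Rightarrow> 'g) \<Rightarrow> bool" where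
  "triple DS S DSt St DT T DTt Tt G0 G1 Gt0 Gt1 \<longleftrightarrow>
     adjoint_pair DS S DSt St \<and>
     core_of_adjoint DT T DS S \<and> core_of_adjoint DTt Tt DSt St \<and>
     clinear_on DT G0 \<and> clinear_on DT G1 \<and> clinear_on DTt Gt0 \<and> clinear_on DTt Gt1"

definition cond_G :: "'a::complex_inner set \<Rightarrow> ('a \<Rightarrow> 'a) \<Rightarrow> 'a set \<Rightarrow> ('a \<Rightarrow> 'a) \<Rightarrow>
    ('a \<Rightarrow> 'g::complex_inner) \<Rightarrow> ('a \<Rightarrow> 'g) \<Rightarrow> ('a \<Rightarrow> 'g) \<Rightarrow> ('a \<Rightarrow> 'g) \<Rightarrow> bool" where
  "cond_G DT T DTt Tt G0 G1 Gt0 Gt1 \<longleftrightarrow>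
     (\<forall>f\<in>DT. \<forall>g\<in>DTt.
        cinner (T f) g - cinner f (Tt g) = cinner (G1 f) (Gt0 g) - cinner (G0 f) (Gt1 g))"

text \<open>Condition (M): A0 = T restricted to ker G0, At0 = Tt restricted to ker Gt0,
  A0^* = At0 and At0^* = A0.\<close>
definition cond_M :: "'a::complex_inner set \<Rightarrow> ('a \<Rightarrow> 'a) \<Rightarrow> 'a set \<Rightarrow> ('a \<Rightarrow> 'a) \<Rightarrow>
    ('a \<Rightarrow> 'g::complex_inner) \<Rightarrow> ('a \<Rightarrow> 'g) \<Rightarrow> bool" where
  "cond_M DT T DTt Tt G0 Gt0 \<longleftrightarrow>
     adj {f\<in>DT. G0 f = 0} T = graph {g\<in>DTt. Gt0 g = 0} Tt \<and>
     adj {g\<in>DTt. Gt0 g = 0} Tt = graph {f\<in>DT. G0 f = 0} T"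

definition cond_DD :: "'a set \<Rightarrow> 'a set \<Rightarrow>
    ('a \<Rightarrow> 'g::topological_space) \<Rightarrow> ('a \<Rightarrow> 'g) \<Rightarrow> ('a \<Rightarrow> 'g) \<Rightarrow> ('a \<Rightarrow> 'g) \<Rightarrow> bool" where
  "cond_DD DT DTt G0 G1 Gt0 Gt1 \<longleftrightarrow>
     closure ((\<lambda>f. (G0 f, G1 f)) ` DT) = UNIV \<and> closure ((\<lambda>g. (Gt0 g, Gt1 g)) ` DTt) = UNIV"

definition quasi_boundary_triple where
  "quasi_boundary_triple DS S DSt St DT T DTt Tt G0 G1 Gt0 Gt1 \<longleftrightarrow>
     triple DS S DSt St DT T DTt Tt G0 G1 Gt0 Gt1 \<and>
     cond_G DT T DTt Tt G0 G1 Gt0 Gt1 \<and> cond_DD DT DTt G0 G1 Gt0 Gt1 \<and>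
     cond_M DT T DTt Tt G0 Gt0"

end

theory Submission
  imports Defs
begin

text \<open>
  Let \<open>(x, y)\<close> be orthogonal to all \<open>(G0 f, G1 f)\<close> and pick \<open>g \<in> DTt\<close> with
  \<open>Gt0 g = y\<close>. Then (G) gives \<open>(T f, g) = (f, Tt g)\<close> for every \<open>f \<in> ker G0\<close>, i.e.
  \<open>g\<close> lies in the domain of \<open>A\<^sub>0\<^sup>*\<close>; by (M) this means \<open>Gt0 g = 0\<close>, so \<open>y = 0\<close>, and
  \<open>x = 0\<close> because it is orthogonal to the dense set \<open>ran G0\<close>. A subspace of a Hilbert space
  with trivial orthogonal complement is dense, by the nearest-point argument. Part (ii) is
  part (i) for the swapped triple, since (G) and (M) are symmetric in the two sides.
\<close>

lemma cinner_zero_left [simp]: "cinner (0::'a::complex_inner) y = 0"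
  using cinner_add_left[of "0::'a" 0 y] by simp

lemma cinner_zero_right [simp]: "cinner (x::'a::complex_inner) 0 = 0"
  using cinner_commute[of x 0] by simp

lemma cinner_add_right: "cinner (x::'a::complex_inner) (y + z) = cinner x y + cinner x z"
  by (metis cinner_add_left cinner_commute complex_cnj_add)

lemma cinner_scaleC_right: "cinner (x::'a::complex_inner) (r *\<^sub>C y) = cnj r * cinner x y"
  by (metis cinner_commute cinner_scaleC_left complex_cnj_mult)

lemma cinner_minus_left: "cinner (- x::'a::complex_inner) y = - cinner x y"
  using cinner_add_left[of x "- x" y] by (simp add: add_eq_0_iff2)

lemma cinner_minus_right: "cinner (x::'a::complex_inner) (- y) = - cinner x y"
  by (metis cinner_commute cinner_minus_left complex_cnj_minus)

lemma cinner_diff_left: "cinner (x - y::'a::complex_inner) z = cinner x z - cinner y z"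
  using cinner_add_left[of x "- y" z] by (simp add: cinner_minus_left)

lemma cinner_diff_right: "cinner (x::'a::complex_inner) (y - z) = cinner x y - cinner x z"
  using cinner_add_right[of x y "- z"] by (simp add: cinner_minus_right)

lemma power2_norm_eq_cinner: "(norm (x::'a::complex_inner))\<^sup>2 = Re (cinner x x)"
  using norm_eq_sqrt_cinner[of x] cinner_ge_zero[of x] by simp

lemma cinner_self_eq_power2_norm: "cinner (x::'a::complex_inner) x = of_real ((norm x)\<^sup>2)"
  using cinner_ge_zero[of x] by (simp add: power2_norm_eq_cinner complex_eq_iff)

lemma scaleC_zero_left [simp]: "0 *\<^sub>C (x::'a::complex_vector) = 0"
  using scaleC_add_left[of 0 0 x] by simp

lemma parallelogram_law:
  fixes a b :: "'a::complex_inner"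
  shows "(norm (a + b))\<^sup>2 + (norm (a - b))\<^sup>2 = 2 * (norm a)\<^sup>2 + 2 * (norm b)\<^sup>2"
  unfolding power2_norm_eq_cinner
  by (simp add: cinner_add_left cinner_add_right cinner_diff_left cinner_diff_right)

lemma Re_cinner_le_norm_mult: "Re (cinner (a::'a::complex_inner) b) \<le> norm a * norm b"
proof -
  have "(norm (a + b))\<^sup>2 = (norm a)\<^sup>2 + (norm b)\<^sup>2 + 2 * Re (cinner a b)"
    using cinner_commute[of b a]
    by (simp add: power2_norm_eq_cinner cinner_add_left cinner_add_right)
  moreover have "(norm (a + b))\<^sup>2 \<le> (norm a + norm b)\<^sup>2"
    by (simp add: power_mono norm_triangle_ineq)
  ultimately show ?thesis by (simp add: power2_sum)
qed

lemma power2_norm_diff_scaleC: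
  fixes z w :: "'a::complex_inner"
  shows "(norm (z - t *\<^sub>C w))\<^sup>2 = (norm z)\<^sup>2 - 2 * Re (t * cinner w z) + (cmod t)\<^sup>2 * (norm w)\<^sup>2"
proof -
  have "cinner (z - t *\<^sub>C w) (z - t *\<^sub>C w) =
      cinner z z - cnj (t * cinner w z) - t * cinner w z + (t * cnj t) * cinner w w"
    using cinner_commute[of z w]
    by (simp add: cinner_diff_left cinner_diff_right cinner_scaleC_left cinner_scaleC_right algebra_simps)
  moreover have "t * cnj t = of_real ((cmod t)\<^sup>2)"
    using complex_norm_square[of t] by simp
  ultimately have "Re (cinner (z - t *\<^sub>C w) (z - t *\<^sub>C w)) =
      Re (cinner z z) - 2 * Re (t * cinner w z) + (cmod t)\<^sup>2 * Re (cinner w w)"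
    by simp
  then show ?thesis
    by (simp only: power2_norm_eq_cinner)
qed

lemma cinner_dense_eq_zero:
  fixes x :: "'a::complex_inner"
  assumes "closure A = UNIV" and "\<And>u. u \<in> A \<Longrightarrow> cinner u x = 0"
  shows "x = 0"
proof (rule ccontr)
  assume "x \<noteq> 0"
  then have pos: "norm x > 0" by simp
  obtain u where u: "u \<in> A" "dist u x < norm x / 2"
    using assms(1) pos by (metis UNIV_I closure_approachable half_gt_zero)
  have "(norm x)\<^sup>2 = Re (cinner (x - u) x)"
    using assms(2)[OF u(1)] by (simp add: power2_norm_eq_cinner cinner_diff_left)
  also have "\<dots> \<le> norm (x - u) * norm x" by (rule Re_cinner_le_norm_mult)
  also have "\<dots> < norm x / 2 * norm x"
    using u(2) pos by (simp add: dist_norm norm_minus_commute)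
  finally show False using pos by (simp add: power2_eq_square)
qed

lemma infdist_le_closure:
  assumes "x \<in> closure A"
  shows "infdist p A \<le> dist p x"
proof -
  have "closed {x. infdist p A \<le> dist p x}"
    by (intro closed_Collect_le continuous_intros)
  moreover have "A \<subseteq> {x. infdist p A \<le> dist p x}"
    by (auto intro: infdist_le)
  ultimately show ?thesis
    using assms closure_minimal by blast
qed

lemma nearest_point_in_closure:
  fixes V :: "'a::{complex_inner,complete_space} set"
  assumes "V \<noteq> {}" and midpoint: "\<And>x y. x \<in> V \<Longrightarrow> y \<in> V \<Longrightarrow> (1/2) *\<^sub>R (x + y) \<in> V"
  obtains q where "q \<in> closure V" and "dist p q = infdist p V"
proof -
  define d where "d = infdist p V"
  define e :: "nat \<Rightarrow> real" where "e n = inverse (real (Suc n))" for n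
  have e_pos: "e n > 0" for n
    by (simp add: e_def)
  have e_lim: "e \<longlonglongrightarrow> 0"
    unfolding e_def by (rule LIMSEQ_inverse_real_of_nat)
  have d_le: "d \<le> norm (p - v)" if "v \<in> V" for v
    using infdist_le[OF that, of p] by (simp add: d_def dist_norm)
  have "\<exists>v\<in>V. (norm (p - v))\<^sup>2 < d\<^sup>2 + e n" for n
  proof -
    have "d < sqrt (d\<^sup>2 + e n)"
      using e_pos[of n] infdist_nonneg[of p V]
      by (simp add: d_def real_less_rsqrt)
    then obtain v where "v \<in> V" "dist p v < sqrt (d\<^sup>2 + e n)"
      using assms(1) by (auto simp: d_def infdist_notempty cINF_less_iff)
    moreover have "(sqrt (d\<^sup>2 + e n))\<^sup>2 = d\<^sup>2 + e n"
      using e_pos[of n] by simp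
    ultimately show ?thesis
      by (metis dist_norm norm_ge_zero power_strict_mono zero_less_numeral)
  qed
  then obtain v where v: "\<And>n. v n \<in> V" and v_near: "\<And>n. (norm (p - v n))\<^sup>2 < d\<^sup>2 + e n"
    by metis
  \<comment> \<open>The parallelogram law, with the midpoint of \<open>v m\<close> and \<open>v n\<close> at distance at least \<open>d\<close> from \<open>p\<close>.\<close>
  have dist_v: "(norm (v m - v n))\<^sup>2 \<le> 2 * (e m + e n)" for m n
  proof -
    have "(p - v m) + (p - v n) = 2 *\<^sub>R (p - (1/2) *\<^sub>R (v m + v n))"
      by (simp add: algebra_simps scaleR_2)
    then have "2 * d \<le> norm ((p - v m) + (p - v n))"
      using d_le[OF midpoint[OF v v, of m n]] by simp
    then have "(2 * d)\<^sup>2 \<le> (norm ((p - v m) + (p - v n)))\<^sup>2"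
      using infdist_nonneg[of p V] unfolding d_def by (intro power_mono) auto
    moreover have "norm (v m - v n) = norm ((p - v m) - (p - v n))"
      by (simp add: norm_minus_commute)
    ultimately show ?thesis
      using parallelogram_law[of "p - v m" "p - v n"] v_near[of m] v_near[of n]
      by (simp add: power_mult_distrib)
  qed
  have "Cauchy v"
  proof (rule metric_CauchyI)
    fix \<epsilon> :: real
    assume "\<epsilon> > 0"
    then have "(\<lambda>n. 4 * e n) \<longlonglongrightarrow> 0" "\<epsilon>\<^sup>2 > 0"
      using tendsto_mult_right_zero[OF e_lim] by auto
    then obtain N where N: "\<And>n. n \<ge> N \<Longrightarrow> 4 * e n < \<epsilon>\<^sup>2"
      using e_pos by (metis (no_types, lifting) LIMSEQ_D abs_of_pos real_norm_def diff_zero mult_pos_pos zero_less_numeral)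
    have "dist (v m) (v n) < \<epsilon>" if "m \<ge> N" "n \<ge> N" for m n
    proof -
      have "e m \<le> e N" "e n \<le> e N"
        using that by (simp_all add: e_def le_imp_inverse_le)
      then have "(norm (v m - v n))\<^sup>2 < \<epsilon>\<^sup>2"
        using dist_v[of m n] N[OF order.refl] by argo
      then show ?thesis
        using \<open>\<epsilon> > 0\<close> by (simp add: dist_norm power_less_imp_less_base)
    qed
    then show "\<exists>M. \<forall>m\<ge>M. \<forall>n\<ge>M. dist (v m) (v n) < \<epsilon>"
      by blast
  qed
  then obtain q where q: "v \<longlonglongrightarrow> q"
    using Cauchy_convergent_iff convergent_def by blast
  then have "q \<in> closure V"
    using v closure_sequential by blast
  moreover have "(norm (p - q))\<^sup>2 \<le> d\<^sup>2"
  proof (rule LIMSEQ_le)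
    show "(\<lambda>n. (norm (p - v n))\<^sup>2) \<longlonglongrightarrow> (norm (p - q))\<^sup>2"
      by (intro tendsto_intros q)
    show "(\<lambda>n. d\<^sup>2 + e n) \<longlonglongrightarrow> d\<^sup>2"
      using tendsto_add[OF tendsto_const e_lim] by simp
    show "\<exists>N. \<forall>n\<ge>N. (norm (p - v n))\<^sup>2 \<le> d\<^sup>2 + e n"
      using v_near less_imp_le by blast
  qed
  then have "dist p q \<le> d"
    using infdist_nonneg[of p V] by (simp add: d_def dist_norm power2_le_iff_abs_le)
  moreover have "d \<le> dist p q"
    using infdist_le_closure[OF \<open>q \<in> closure V\<close>] by (simp add: d_def)
  ultimately show ?thesis
    using that by (simp add: d_def)
qed

lemma cinner_eq_zero_if_norm_le_norm_diff_scaleC: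
  fixes z w :: "'a::complex_inner"
  assumes "\<And>t. norm z \<le> norm (z - t *\<^sub>C w)"
  shows "cinner w z = 0"
proof (rule ccontr)
  assume "cinner w z \<noteq> 0"
  then have c_pos: "(cmod (cinner w z))\<^sup>2 > 0"
    by simp
  define s where "s = 1 / ((norm w)\<^sup>2 + 1)"
  \<comment> \<open>Moving from \<open>z\<close> by a small multiple of \<open>w\<close> against the phase of \<open>cinner w z\<close> decreases the norm.\<close>
  define t where "t = of_real s * cnj (cinner w z)"
  have s_pos: "s > 0" and s_less: "s * (norm w)\<^sup>2 < 1"
    by (simp_all add: s_def add_pos_nonneg add.commute[of _ 1] pos_add_strict)
  have "(norm z)\<^sup>2 \<le> (norm (z - t *\<^sub>C w))\<^sup>2"
    using assms[of t] by (simp add: power_mono)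
  also have "\<dots> = (norm z)\<^sup>2 - 2 * s * (cmod (cinner w z))\<^sup>2 + s\<^sup>2 * (cmod (cinner w z))\<^sup>2 * (norm w)\<^sup>2"
    unfolding power2_norm_diff_scaleC t_def cmod_power2
    using s_pos by (simp add: norm_mult power_mult_distrib cmod_power2 power2_eq_square algebra_simps)
  finally have "2 * (s * (cmod (cinner w z))\<^sup>2) \<le> (s * (cmod (cinner w z))\<^sup>2) * (s * (norm w)\<^sup>2)"
    by (simp add: power2_eq_square algebra_simps)
  then have "2 \<le> s * (norm w)\<^sup>2"
    using s_pos c_pos by simp
  then show False
    using s_less by simp
qed

instantiation prod :: (complex_inner, complex_inner) complex_inner
begin

definition scaleC_prod_def: "c *\<^sub>C x = (c *\<^sub>C fst x, c *\<^sub>C snd x)"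

definition cinner_prod_def: "cinner x y = cinner (fst x) (fst y) + cinner (snd x) (snd y)"

instance
proof
  fix r :: real
  show "(scaleR r :: 'a \<times> 'b \<Rightarrow> _) = scaleC (of_real r)"
    by (rule ext) (simp add: scaleR_prod_def scaleC_prod_def scaleR_scaleC)
next
  fix a b :: complex and x y z :: "'a \<times> 'b"
  show "a *\<^sub>C (x + y) = a *\<^sub>C x + a *\<^sub>C y"
    by (simp add: scaleC_prod_def scaleC_add_right)
  show "(a + b) *\<^sub>C x = a *\<^sub>C x + b *\<^sub>C x"
    by (simp add: scaleC_prod_def scaleC_add_left)
  show "a *\<^sub>C b *\<^sub>C x = (a * b) *\<^sub>C x"
    by (simp add: scaleC_prod_def scaleC_scaleC)
  show "1 *\<^sub>C x = x"
    by (simp add: scaleC_prod_def scaleC_one)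
  show "cinner x y = cnj (cinner y x)"
    by (simp add: cinner_prod_def cinner_commute[of "fst x"] cinner_commute[of "snd x"])
  show "cinner (x + y) z = cinner x z + cinner y z"
    by (simp add: cinner_prod_def cinner_add_left)
  show "cinner (a *\<^sub>C x) y = a * cinner x y"
    by (simp add: cinner_prod_def scaleC_prod_def cinner_scaleC_left algebra_simps)
  show "Im (cinner x x) = 0 \<and> 0 \<le> Re (cinner x x)"
    using cinner_ge_zero[of "fst x"] cinner_ge_zero[of "snd x"] by (simp add: cinner_prod_def)
  show "norm x = sqrt (Re (cinner x x))"
    by (simp add: norm_prod_def cinner_prod_def power2_norm_eq_cinner)
  show "cinner x x = 0 \<longleftrightarrow> x = 0"
  proof -
    have "cinner x x = of_real ((norm (fst x))\<^sup>2 + (norm (snd x))\<^sup>2)"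
      by (simp add: cinner_prod_def cinner_self_eq_power2_norm)
    then show ?thesis
      by (simp add: sum_power2_eq_zero_iff prod_eq_iff del: of_real_add)
  qed
qed

end

lemma cinner_Pair [simp]: "cinner (a, b) (c, d) = cinner a c + cinner b d"
  by (simp add: cinner_prod_def)

lemma scaleC_Pair [simp]: "c *\<^sub>C (a, b) = (c *\<^sub>C a, c *\<^sub>C b)"
  by (simp add: scaleC_prod_def)

lemma dense_if_orthogonal_complement_zero:
  fixes V :: "'a::{complex_inner,complete_space} set"
  assumes V: "csubspace V" and orth: "\<And>z. (\<And>v. v \<in> V \<Longrightarrow> cinner v z = 0) \<Longrightarrow> z = 0"
  shows "closure V = UNIV"
proof -
  have V_add: "x + y \<in> V" and V_scaleC: "c *\<^sub>C x \<in> V" if "x \<in> V" "y \<in> V" for x y c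
    using V that by (simp_all add: csubspace_def)
  have "p \<in> closure V" for p
  proof (rule ccontr)
    assume p: "p \<notin> closure V"
    have "V \<noteq> {}"
      using V by (auto simp: csubspace_def)
    moreover have "(1/2) *\<^sub>R (x + y) \<in> V" if "x \<in> V" "y \<in> V" for x y
      unfolding scaleR_scaleC using V_add V_scaleC that by blast
    ultimately obtain q where q: "q \<in> closure V" and dist_q: "dist p q = infdist p V"
      using nearest_point_in_closure by blast
    have "cinner w (p - q) = 0" if w: "w \<in> V" for w
    proof (rule cinner_eq_zero_if_norm_le_norm_diff_scaleC)
      fix t
      have "(+) (t *\<^sub>C w) ` V \<subseteq> V"
        using V_add V_scaleC w by blast
      then have "t *\<^sub>C w + q \<in> closure V"
        using q closure_mono[of "(+) (t *\<^sub>C w) ` V" V] closure_translation[of "t *\<^sub>C w" V] by blast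
      then have "infdist p V \<le> dist p (t *\<^sub>C w + q)"
        by (rule infdist_le_closure)
      moreover have "dist p (t *\<^sub>C w + q) = norm (p - q - t *\<^sub>C w)"
        by (simp add: dist_norm algebra_simps)
      ultimately show "norm (p - q) \<le> norm (p - q - t *\<^sub>C w)"
        using dist_q by (simp add: dist_norm)
    qed
    then have "p - q = 0"
      by (rule orth)
    then show False
      using p q by simp
  qed
  then show ?thesis
    by auto
qed

lemma clinear_on_zero: "clinear_on D A \<Longrightarrow> 0 \<in> D \<Longrightarrow> A 0 = 0"
  unfolding clinear_on_def by (metis scaleC_zero_left)

lemma csubspace_image_pair:
  assumes D: "csubspace D" and A: "clinear_on D A" and B: "clinear_on D B"
  shows "csubspace ((\<lambda>f. (A f, B f)) ` D)"
  unfolding csubspace_def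
proof (intro conjI ballI allI)
  have "0 \<in> D"
    using D by (simp add: csubspace_def)
  moreover have "(0, 0) = (A 0, B 0)"
    using clinear_on_zero[OF A \<open>0 \<in> D\<close>] clinear_on_zero[OF B \<open>0 \<in> D\<close>] by simp
  ultimately show "0 \<in> (\<lambda>f. (A f, B f)) ` D"
    by (auto simp: zero_prod_def)
next
  fix x y
  assume "x \<in> (\<lambda>f. (A f, B f)) ` D" "y \<in> (\<lambda>f. (A f, B f)) ` D"
  then obtain f g where "f \<in> D" "g \<in> D" "x = (A f, B f)" "y = (A g, B g)"
    by blast
  moreover from this have "f + g \<in> D" "x + y = (A (f + g), B (f + g))"
    using D A B by (simp_all add: csubspace_def clinear_on_def)
  ultimately show "x + y \<in> (\<lambda>f. (A f, B f)) ` D"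
    by simp
next
  fix c x
  assume "x \<in> (\<lambda>f. (A f, B f)) ` D"
  then obtain f where "f \<in> D" "x = (A f, B f)"
    by blast
  moreover from this have "c *\<^sub>C f \<in> D" "c *\<^sub>C x = (A (c *\<^sub>C f), B (c *\<^sub>C f))"
    using D A B by (simp_all add: csubspace_def clinear_on_def)
  ultimately show "c *\<^sub>C x \<in> (\<lambda>f. (A f, B f)) ` D"
    by simp
qed

lemma cond_G_swap:
  assumes "cond_G DT T DTt Tt G0 G1 Gt0 Gt1"
  shows "cond_G DTt Tt DT T Gt0 Gt1 G0 G1"
  unfolding cond_G_def
proof (intro ballI)
  fix g f
  assume "g \<in> DTt" "f \<in> DT"
  then have "cinner (T f) g - cinner f (Tt g) = cinner (G1 f) (Gt0 g) - cinner (G0 f) (Gt1 g)"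
    using assms by (simp add: cond_G_def)
  then have "- cnj (cinner (T f) g - cinner f (Tt g)) = - cnj (cinner (G1 f) (Gt0 g) - cinner (G0 f) (Gt1 g))"
    by simp
  then have "cinner (Tt g) f - cinner g (T f) = - cnj (cinner (G1 f) (Gt0 g) - cinner (G0 f) (Gt1 g))"
    by (simp add: cinner_commute[of "Tt g" f] cinner_commute[of g "T f"])
  then show "cinner (Tt g) f - cinner g (T f) = cinner (Gt1 g) (G0 f) - cinner (Gt0 g) (G1 f)"
    by (simp add: cinner_commute[of "Gt1 g" "G0 f"] cinner_commute[of "Gt0 g" "G1 f"])
qed

lemma cond_M_swap: "cond_M DT T DTt Tt G0 Gt0 \<Longrightarrow> cond_M DTt Tt DT T Gt0 G0"
  by (simp add: cond_M_def)

lemma boundary_pair_range_dense: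
  fixes G0 G1 :: "'a::complex_inner \<Rightarrow> 'g::{complex_inner,complete_space}"
  assumes DT: "csubspace DT" and G0: "clinear_on DT G0" and G1: "clinear_on DT G1"
    and G: "cond_G DT T DTt Tt G0 G1 Gt0 Gt1" and M: "cond_M DT T DTt Tt G0 Gt0"
    and dense: "closure (G0 ` DT) = UNIV" and onto: "Gt0 ` DTt = UNIV"
  shows "closure ((\<lambda>f. (G0 f, G1 f)) ` DT) = UNIV"
proof (rule dense_if_orthogonal_complement_zero[OF csubspace_image_pair[OF DT G0 G1]])
  fix z :: "'g \<times> 'g"
  assume "\<And>v. v \<in> (\<lambda>f. (G0 f, G1 f)) ` DT \<Longrightarrow> cinner v z = 0"
  then have orth: "cinner (G0 f) (fst z) + cinner (G1 f) (snd z) = 0" if "f \<in> DT" for f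
    using that by (cases z) auto
  obtain g where g: "g \<in> DTt" "Gt0 g = snd z"
    using onto by (metis UNIV_I imageE)
  have "cinner (T f) g = cinner f (Tt g)" if f: "f \<in> DT" "G0 f = 0" for f
  proof -
    have "cinner (T f) g - cinner f (Tt g) = cinner (G1 f) (Gt0 g) - cinner (G0 f) (Gt1 g)"
      using G g(1) f(1) by (simp add: cond_G_def)
    then show ?thesis
      using orth[OF f(1)] g(2) f(2) by simp
  qed
  then have "(g, Tt g) \<in> adj {f \<in> DT. G0 f = 0} T"
    by (simp add: adj_def)
  then have snd_z: "snd z = 0"
    using M g by (auto simp: cond_M_def graph_def)
  have "fst z = 0"
    using orth snd_z by (intro cinner_dense_eq_zero[OF dense]) auto
  with snd_z show "z = 0"
    by (simp add: prod_eq_iff)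
qed

theorem lemma2p3:
  fixes DS DSt DT DTt :: "'a::{complex_inner,complete_space} set"
    and S St T Tt :: "'a \<Rightarrow> 'a"
    and G0 G1 Gt0 Gt1 :: "'a \<Rightarrow> 'g::{complex_inner,complete_space}"
  assumes sep: "\<exists>C::'a set. countable C \<and> closure C = UNIV"
    and tr: "triple DS S DSt St DT T DTt Tt G0 G1 Gt0 Gt1"
    and G: "cond_G DT T DTt Tt G0 G1 Gt0 Gt1"
    and M: "cond_M DT T DTt Tt G0 Gt0"
  shows "(closure (G0 ` DT) = UNIV \<and> Gt0 ` DTt = UNIV
            \<longrightarrow> closure ((\<lambda>f. (G0 f, G1 f)) ` DT) = UNIV)
       \<and> (closure (Gt0 ` DTt) = UNIV \<and> G0 ` DT = UNIV
            \<longrightarrow> closure ((\<lambda>g. (Gt0 g, Gt1 g)) ` DTt) = UNIV)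
       \<and> (G0 ` DT = UNIV \<and> Gt0 ` DTt = UNIV
            \<longrightarrow> cond_DD DT DTt G0 G1 Gt0 Gt1
                \<and> quasi_boundary_triple DS S DSt St DT T DTt Tt G0 G1 Gt0 Gt1)"
proof -
  have "csubspace DT" "csubspace DTt"
    and "clinear_on DT G0" "clinear_on DT G1" "clinear_on DTt Gt0" "clinear_on DTt Gt1"
    using tr unfolding triple_def core_of_adjoint_def lin_op_def by blast+
  note dense_pair = boundary_pair_range_dense[OF this(1,3,4) G M]
    and dense_pair_swap = boundary_pair_range_dense[OF this(2,5,6) cond_G_swap[OF G] cond_M_swap[OF M]]
  moreover have "quasi_boundary_triple DS S DSt St DT T DTt Tt G0 G1 Gt0 Gt1"
    if "cond_DD DT DTt G0 G1 Gt0 Gt1"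
    using tr G M that by (simp add: quasi_boundary_triple_def)
  ultimately show ?thesis
    by (simp add: cond_DD_def)
qed

end
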